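(* Let $X=\Sigma_P$ be a one-sided subshift on an at most countable alphabet $S$ with transition matrix $P$, let $p:X\to\mathbb{R}$ be a function, $\mathcal{C}\subset\Sigma_P^*$ and $\eta>0$. Let $\varphi_1,\varphi_2:X\to\mathbb{R}_{>0}$ be bounded and bounded away from zero, with $-\infty<\mathcal{P}_{\varphi_i}(p,\mathcal{C})<0$ for $i=1,2$. Then \[\frac{1}{\mathcal{P}_{\varphi_1+\varphi_2}(p,\mathcal{C})}\ge\frac{1}{\mathcal{P}_{\varphi_1}(p,\mathcal{C})}+\frac{1}{\mathcal{P}_{\varphi_2}(p,\mathcal{C})}.\]
   Context: $\Sigma_P=\{x\in S^{\mathbb{N}}:p_{x_i,x_{i+1}}\ne0\ \forall i\}$ with the shift $\theta$; $\Sigma_P^*$ is the set of finite admissible words, $|w|$ the length and $[w]$ the cylinder of $w$. For $f:X\to\mathbb{R}$, $S_wf=\sup_{x\in[w]}\sum_{k=0}^{|w|-1}f\circ\theta^k(x)$. For $\varphi\ge0$, the $\varphi$-induced pressure of $p$ with respect to $\mathcal{C}$ is $\mathcal{P}_\varphi(p,\mathcal{C})=\limsup_{t\to\infty}\frac1t\log\sum_{w\in\mathcal{C},\,t-\eta<S_w\varphi\le t}\exp(S_wp)$. *)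

theory Defs
  imports "HOL-Analysis.Analysis"
begin

definition subshift :: "'a set \<Rightarrow> ('a \<Rightarrow> 'a \<Rightarrow> real) \<Rightarrow> (nat \<Rightarrow> 'a) set" where
  "subshift S P = {x. (\<forall>i. x i \<in> S) \<and> (\<forall>i. P (x i) (x (Suc i)) \<noteq> 0)}"

definition shift :: "(nat \<Rightarrow> 'a) \<Rightarrow> (nat \<Rightarrow> 'a)" where
  "shift x = (\<lambda>i. x (Suc i))"

definition admissible_words :: "'a set \<Rightarrow> ('a \<Rightarrow> 'a \<Rightarrow> real) \<Rightarrow> 'a list set" where
  "admissible_words S P = {w. set w \<subseteq> S \<and> (\<forall>i. Suc i < length w \<longrightarrow> P (w ! i) (w ! Suc i) \<noteq> 0)}"

definition cylinder :: "'a set \<Rightarrow> ('a \<Rightarrow> 'a \<Rightarrow> real) \<Rightarrow> 'a list \<Rightarrow> (nat \<Rightarrow> 'a) set" where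
  "cylinder S P w = {x \<in> subshift S P. \<forall>i < length w. x i = w ! i}"

text \<open>S_w f = sup over the cylinder of the Birkhoff sum (in ereal; empty cylinder gives -\<infinity>).\<close>
definition word_sum :: "'a set \<Rightarrow> ('a \<Rightarrow> 'a \<Rightarrow> real) \<Rightarrow> ((nat \<Rightarrow> 'a) \<Rightarrow> real) \<Rightarrow> 'a list \<Rightarrow> ereal" where
  "word_sum S P f w = (SUP x \<in> cylinder S P w. ereal (\<Sum>k<length w. f ((shift ^^ k) x)))"

definition exp_ereal :: "ereal \<Rightarrow> ennreal" where
  "exp_ereal a = (if a = -\<infinity> then 0 else if a = \<infinity> then \<infinity> else ennreal (exp (real_of_ereal a)))"

definition ln_ennreal :: "ennreal \<Rightarrow> ereal" where
  "ln_ennreal s = (if s = 0 then -\<infinity> else if s = \<infinity> then \<infinity> else ereal (ln (enn2real s)))"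

definition induced_pressure ::
  "'a set \<Rightarrow> ('a \<Rightarrow> 'a \<Rightarrow> real) \<Rightarrow> real \<Rightarrow> ((nat \<Rightarrow> 'a) \<Rightarrow> real) \<Rightarrow> ((nat \<Rightarrow> 'a) \<Rightarrow> real) \<Rightarrow> 'a list set \<Rightarrow> ereal" where
  "induced_pressure S P \<eta> \<phi> p C =
     Limsup at_top (\<lambda>t::real. ereal (1 / t) *
        ln_ennreal (infsum (\<lambda>w. exp_ereal (word_sum S P p w))
           {w \<in> C. ereal (t - \<eta>) < word_sum S P \<phi> w \<and> word_sum S P \<phi> w \<le> ereal t}))"

end

theory Submission
  imports Defs
begin

text \<open>
  Cover the words of \<open>(\<phi>\<^sub>1 + \<phi>\<^sub>2)\<close>-level \<open>t\<close> by the \<open>O(t\<^sup>2)\<close> bins of words whose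
  \<open>\<phi>\<^sub>1\<close>- and \<open>\<phi>\<^sub>2\<close>-sums lie at levels \<open>u\<close> and \<open>v\<close> of an \<open>\<eta>\<close>-grid. Since
  \<open>S\<^sub>w(\<phi>\<^sub>1 + \<phi>\<^sub>2) \<le> S\<^sub>w\<phi>\<^sub>1 + S\<^sub>w\<phi>\<^sub>2\<close>, every nonempty bin has \<open>u + v > t - \<eta>\<close>, and its weight is
  bounded both by \<open>exp(-a u)\<close> and by \<open>exp(-b v)\<close> when the pressures are below \<open>-a\<close> and \<open>-b\<close>.
  As \<open>u + v \<ge> t\<close> up to \<open>O(1)\<close>, one of \<open>a u\<close>, \<open>b v\<close> is at least \<open>ab/(a + b) \<cdot> t\<close> up to \<open>O(1)\<close>,
  so the pressure of \<open>\<phi>\<^sub>1 + \<phi>\<^sub>2\<close> is at most \<open>-ab/(a + b)\<close>, which is the claim after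
  taking reciprocals.
\<close>

lemma funpow_shift: "(shift ^^ k) x = (\<lambda>i. x (i + k))"
  by (induction k arbitrary: x) (auto simp: shift_def funpow_Suc_right)

lemma funpow_shift_in_subshift: "x \<in> subshift S P \<Longrightarrow> (shift ^^ k) x \<in> subshift S P"
  by (auto simp: funpow_shift subshift_def)

lemma word_sum_mono:
  assumes "\<And>x. x \<in> subshift S P \<Longrightarrow> f x \<le> g x"
  shows "word_sum S P f w \<le> word_sum S P g w"
  unfolding word_sum_def
proof (rule SUP_mono)
  fix x assume x: "x \<in> cylinder S P w"
  then have "(\<Sum>k<length w. f ((shift ^^ k) x)) \<le> (\<Sum>k<length w. g ((shift ^^ k) x))"
    by (intro sum_mono assms funpow_shift_in_subshift) (simp add: cylinder_def)
  with x show "\<exists>y\<in>cylinder S P w.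
      ereal (\<Sum>k<length w. f ((shift ^^ k) x)) \<le> ereal (\<Sum>k<length w. g ((shift ^^ k) y))"
    by auto
qed

lemma word_sum_add_le:
  "word_sum S P (\<lambda>x. f x + g x) w \<le> word_sum S P f w + word_sum S P g w"
  unfolding word_sum_def
proof (rule SUP_least)
  fix x assume x: "x \<in> cylinder S P w"
  have "ereal (\<Sum>k<length w. f ((shift ^^ k) x) + g ((shift ^^ k) x))
      = ereal (\<Sum>k<length w. f ((shift ^^ k) x)) + ereal (\<Sum>k<length w. g ((shift ^^ k) x))"
    by (simp add: sum.distrib)
  also have "\<dots> \<le> (SUP y\<in>cylinder S P w. ereal (\<Sum>k<length w. f ((shift ^^ k) y)))
      + (SUP y\<in>cylinder S P w. ereal (\<Sum>k<length w. g ((shift ^^ k) y)))"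
    by (intro add_mono SUP_upper x)
  finally show "ereal (\<Sum>k<length w. f ((shift ^^ k) x) + g ((shift ^^ k) x)) \<le> \<dots>" .
qed

lemma word_sum_empty_cylinder: "cylinder S P w = {} \<Longrightarrow> word_sum S P f w = -\<infinity>"
  by (simp add: word_sum_def bot_ereal_def)

lemma word_sum_nonneg:
  assumes "cylinder S P w \<noteq> {}" and "\<And>x. x \<in> subshift S P \<Longrightarrow> 0 \<le> f x"
  shows "0 \<le> word_sum S P f w"
proof -
  obtain x where x: "x \<in> cylinder S P w" using assms(1) by auto
  then have "0 \<le> ereal (\<Sum>k<length w. f ((shift ^^ k) x))"
    by (simp add: sum_nonneg assms(2) funpow_shift_in_subshift cylinder_def)
  also have "\<dots> \<le> word_sum S P f w"
    unfolding word_sum_def by (rule SUP_upper[OF x])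
  finally show ?thesis .
qed

lemma infsum_mono_set_ennreal: "A \<subseteq> B \<Longrightarrow> infsum (f :: _ \<Rightarrow> ennreal) A \<le> infsum f B"
  by (rule infsum_mono_neutral) (auto intro: nonneg_summable_on_complete)

lemma infsum_Un_le_ennreal: "infsum (f :: _ \<Rightarrow> ennreal) (A \<union> B) \<le> infsum f A + infsum f B"
proof -
  have "infsum f (A \<union> B) = infsum f A + infsum f (B - A)"
    by (metis Diff_disjoint Un_Diff_cancel infsum_Un_disjoint nonneg_summable_on_complete zero_le)
  also have "\<dots> \<le> infsum f A + infsum f B"
    by (intro add_left_mono infsum_mono_set_ennreal) auto
  finally show ?thesis .
qed

lemma infsum_UN_le_ennreal:
  "finite K \<Longrightarrow> infsum (f :: _ \<Rightarrow> ennreal) (\<Union>k\<in>K. D k) \<le> (\<Sum>k\<in>K. infsum f (D k))"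
proof (induction K rule: finite_induct)
  case (insert k K)
  have "infsum f (\<Union>k\<in>insert k K. D k) = infsum f (D k \<union> (\<Union>k\<in>K. D k))"
    by simp
  also have "\<dots> \<le> infsum f (D k) + infsum f (\<Union>k\<in>K. D k)"
    by (rule infsum_Un_le_ennreal)
  also have "\<dots> \<le> infsum f (D k) + (\<Sum>k\<in>K. infsum f (D k))"
    by (intro add_left_mono insert.IH)
  finally show ?case using insert.hyps by simp
qed simp

definition growth_rate :: "(real \<Rightarrow> ennreal) \<Rightarrow> ereal" where
  "growth_rate Z = Limsup at_top (\<lambda>t. ereal (1 / t) * ln_ennreal (Z t))"

definition level_words ::
  "'a set \<Rightarrow> ('a \<Rightarrow> 'a \<Rightarrow> real) \<Rightarrow> real \<Rightarrow> ((nat \<Rightarrow> 'a) \<Rightarrow> real) \<Rightarrow> 'a list set \<Rightarrow> real \<Rightarrow> 'a list set"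
  where "level_words S P \<eta> \<phi> C t =
    {w \<in> C. ereal (t - \<eta>) < word_sum S P \<phi> w \<and> word_sum S P \<phi> w \<le> ereal t}"

lemma induced_pressure_eq_growth_rate:
  "induced_pressure S P \<eta> \<phi> p C =
     growth_rate (\<lambda>t. infsum (\<lambda>w. exp_ereal (word_sum S P p w)) (level_words S P \<eta> \<phi> C t))"
  unfolding induced_pressure_def growth_rate_def level_words_def ..

lemma ln_ennreal_ennreal: "z > 0 \<Longrightarrow> ln_ennreal (ennreal z) = ereal (ln z)"
  by (simp add: ln_ennreal_def)

lemma eventually_le_exp_if_growth_rate_less:
  assumes "growth_rate Z < ereal r"
  shows "\<forall>\<^sub>F t in at_top. Z t \<le> ennreal (exp (r * t))"
  using Limsup_lessD[OF assms[unfolded growth_rate_def]] eventually_gt_at_top[of 0]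
proof eventually_elim
  case (elim t)
  show ?case
  proof (cases "Z t" rule: ennreal_cases)
    case (real z)
    show ?thesis
    proof (cases "z = 0")
      case False
      with real have "ln z / t < r" using elim by (simp add: ln_ennreal_ennreal)
      with elim have "ln z < r * t" by (simp add: divide_less_eq)
      with real False have "z < exp (r * t)" by (metis exp_less_cancel_iff exp_ln order_le_less)
      with real show ?thesis by (simp add: ennreal_leI)
    qed (use real in simp)
  next
    case top
    with elim show ?thesis by (simp add: ln_ennreal_def ereal_mult_infty)
  qed
qed

lemma growth_rate_le_if_eventually_le:
  assumes "\<forall>\<^sub>F t in at_top. Z t \<le> ennreal (B t)" and "\<forall>\<^sub>F t in at_top. B t > 0"
    and "((\<lambda>t. ln (B t) / t) \<longlongrightarrow> L) at_top"
  shows "growth_rate Z \<le> ereal L"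
proof -
  have "growth_rate Z \<le> Limsup at_top (\<lambda>t. ereal (ln (B t) / t))"
    unfolding growth_rate_def
  proof (rule Limsup_mono)
    show "\<forall>\<^sub>F t in at_top. ereal (1 / t) * ln_ennreal (Z t) \<le> ereal (ln (B t) / t)"
      using assms(1,2) eventually_gt_at_top[of 0]
    proof eventually_elim
      case (elim t)
      then obtain z where z: "Z t = ennreal z" "0 \<le> z" "z \<le> B t"
        by (cases "Z t" rule: ennreal_cases) (auto simp: ennreal_le_iff2 top_unique)
      show ?case
      proof (cases "z = 0")
        case False
        with z have "ln z \<le> ln (B t)" by simp
        with elim z False show ?thesis by (simp add: ln_ennreal_ennreal divide_right_mono)
      qed (use z elim in \<open>simp add: ln_ennreal_def\<close>)
    qed
  qed
  also have "\<dots> = ereal L"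
    by (rule lim_imp_Limsup) (simp_all add: assms(3))
  finally show ?thesis .
qed

lemma ln_quadratic_exp_over_tendsto:
  fixes c q K :: real
  assumes "c > 0"
  shows "((\<lambda>t. ln ((c * t)\<^sup>2 * exp (- q * (t - K))) / t) \<longlongrightarrow> - q) at_top"
proof -
  have inf: "filterlim (\<lambda>t::real. t) at_infinity at_top"
    by (rule filterlim_at_top_imp_at_infinity[OF filterlim_ident])
  have "((\<lambda>t. 2 * ln c / t + 2 * (ln t / t) - q + q * K / t) \<longlongrightarrow> 0 + 2 * 0 - q + 0) at_top"
    by (intro tendsto_intros tendsto_divide_0[OF tendsto_const inf] ln_x_over_x_tendsto_0)
  moreover have "\<forall>\<^sub>F t in at_top.
      2 * ln c / t + 2 * (ln t / t) - q + q * K / t = ln ((c * t)\<^sup>2 * exp (- q * (t - K))) / t"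
    using eventually_gt_at_top[of 0]
  proof eventually_elim
    case (elim t)
    with assms have "ln ((c * t)\<^sup>2 * exp (- q * (t - K))) = 2 * ln c + 2 * ln t - q * t + q * K"
      by (simp add: ln_mult ln_realpow algebra_simps)
    with elim show ?case by (simp add: field_simps)
  qed
  ultimately show ?thesis by (simp add: tendsto_cong)
qed

lemma growth_rate_le_if_eventually_le_quadratic_exp:
  assumes "\<forall>\<^sub>F t in at_top. Z t \<le> ennreal ((c * t)\<^sup>2 * exp (- q * (t - K)))" and "c > 0"
  shows "growth_rate Z \<le> ereal (- q)"
proof (rule growth_rate_le_if_eventually_le[OF assms(1)])
  show "\<forall>\<^sub>F t in at_top. 0 < (c * t)\<^sup>2 * exp (- q * (t - K))"
    using eventually_gt_at_top[of 0] by eventually_elim (use \<open>c > 0\<close> in simp)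
qed (rule ln_quadratic_exp_over_tendsto[OF \<open>c > 0\<close>])

lemma harmonic_split:
  fixes a b u v X :: real
  assumes "a > 0" "b > 0" "X \<le> u + v"
  shows "a * b / (a + b) * X \<le> a * u \<or> a * b / (a + b) * X \<le> b * v"
proof (rule ccontr)
  assume "\<not> ?thesis"
  then have "a * u < a * (b / (a + b) * X)" and "b * v < b * (a / (a + b) * X)"
    by (simp_all add: ac_simps)
  with assms have "u < b / (a + b) * X" and "v < a / (a + b) * X"
    by (simp_all only: mult_less_cancel_left_pos)
  then have "u + v < b / (a + b) * X + a / (a + b) * X"
    by (rule add_strict_mono)
  also have "\<dots> = X"
    using assms by (simp add: add_divide_distrib[symmetric] ring_distribs(2)[symmetric] add.commute)
  finally show False using assms by simp
qed

text \<open>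
  The weight bound at level \<open>s\<close> is only available for \<open>s \<ge> T\<close>; when one of \<open>u\<close>, \<open>v\<close> lies
  below \<open>T\<close>, the other one exceeds \<open>s\<close>.
\<close>
lemma harmonic_split_above:
  fixes a b u v s T :: real
  assumes "a > 0" "b > 0" "0 \<le> u" "0 \<le> v" "0 \<le> T" "T \<le> s" "s + T < u + v"
  shows "(T \<le> u \<and> a * b / (a + b) * s \<le> a * u) \<or> (T \<le> v \<and> a * b / (a + b) * s \<le> b * v)"
proof -
  have "0 \<le> a * u" "0 \<le> b * v" using assms by simp_all
  consider "u < T" | "v < T" | "T \<le> u" "T \<le> v" by linarith
  then show ?thesis
  proof cases
    case 1
    with assms have "s \<le> 0 + v" "T \<le> v" by simp_all
    have "a * b / (a + b) * s \<le> b * v"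
      using harmonic_split[OF assms(1,2) \<open>s \<le> 0 + v\<close>] \<open>0 \<le> b * v\<close>
      by (metis mult_zero_right order.trans)
    with \<open>T \<le> v\<close> show ?thesis by simp
  next
    case 2
    with assms have "s \<le> u + 0" "T \<le> u" by simp_all
    have "a * b / (a + b) * s \<le> a * u"
      using harmonic_split[OF assms(1,2) \<open>s \<le> u + 0\<close>] \<open>0 \<le> a * u\<close>
      by (metis mult_zero_right order.trans)
    with \<open>T \<le> u\<close> show ?thesis by simp
  next
    case 3
    with assms have "s \<le> u + v" by simp
    from harmonic_split[OF assms(1,2) this] 3 show ?thesis by auto
  qed
qed

lemma level_words_grid:
  assumes "\<eta> > 0" "w \<in> C" "0 \<le> word_sum S P \<psi> w" "word_sum S P \<psi> w \<le> ereal t"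
  shows "\<exists>i\<le>nat \<lceil>t / \<eta>\<rceil>. w \<in> level_words S P \<eta> \<psi> C (real i * \<eta>)"
proof -
  obtain x where x: "word_sum S P \<psi> w = ereal x" "0 \<le> x" "x \<le> t"
    using assms(3,4) by (cases "word_sum S P \<psi> w") auto
  define i where "i = nat \<lceil>x / \<eta>\<rceil>"
  have "real i = of_int \<lceil>x / \<eta>\<rceil>"
    using x assms(1) unfolding i_def by simp
  then have "x / \<eta> \<le> real i" "real i < x / \<eta> + 1" by linarith+
  with assms(1) have "x \<le> real i * \<eta>" "real i * \<eta> - \<eta> < x" by (simp_all add: field_simps)
  moreover have "i \<le> nat \<lceil>t / \<eta>\<rceil>"
    unfolding i_def using x assms(1) by (intro nat_mono ceiling_mono divide_right_mono) auto
  ultimately show ?thesis using x assms(2) unfolding level_words_def by auto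
qed

lemma level_words_add_subset_bins:
  fixes t :: real
  assumes "\<eta> > 0"
    and nonneg: "\<And>x. x \<in> subshift S P \<Longrightarrow> 0 \<le> \<phi>\<^sub>1 x" "\<And>x. x \<in> subshift S P \<Longrightarrow> 0 \<le> \<phi>\<^sub>2 x"
  defines "N \<equiv> nat \<lceil>t / \<eta>\<rceil>"
  shows "level_words S P \<eta> (\<lambda>x. \<phi>\<^sub>1 x + \<phi>\<^sub>2 x) C t \<subseteq>
    (\<Union>(i, j)\<in>{..N} \<times> {..N}. level_words S P \<eta> (\<lambda>x. \<phi>\<^sub>1 x + \<phi>\<^sub>2 x) C t
       \<inter> level_words S P \<eta> \<phi>\<^sub>1 C (real i * \<eta>) \<inter> level_words S P \<eta> \<phi>\<^sub>2 C (real j * \<eta>))"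
proof
  fix w assume w: "w \<in> level_words S P \<eta> (\<lambda>x. \<phi>\<^sub>1 x + \<phi>\<^sub>2 x) C t"
  then have "w \<in> C" and above: "ereal (t - \<eta>) < word_sum S P (\<lambda>x. \<phi>\<^sub>1 x + \<phi>\<^sub>2 x) w"
    and below: "word_sum S P (\<lambda>x. \<phi>\<^sub>1 x + \<phi>\<^sub>2 x) w \<le> ereal t"
    unfolding level_words_def by auto
  have cyl: "cylinder S P w \<noteq> {}"
  proof
    assume "cylinder S P w = {}"
    then have "word_sum S P (\<lambda>x. \<phi>\<^sub>1 x + \<phi>\<^sub>2 x) w = -\<infinity>"
      by (rule word_sum_empty_cylinder)
    with above show False by simp
  qed
  have grid: "\<exists>i\<le>N. w \<in> level_words S P \<eta> \<psi> C (real i * \<eta>)"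
    if "\<And>x. x \<in> subshift S P \<Longrightarrow> 0 \<le> \<psi> x" "\<And>x. x \<in> subshift S P \<Longrightarrow> \<psi> x \<le> \<phi>\<^sub>1 x + \<phi>\<^sub>2 x"
    for \<psi>
    unfolding N_def
  proof (rule level_words_grid[OF assms(1) \<open>w \<in> C\<close>])
    show "0 \<le> word_sum S P \<psi> w"
      by (intro word_sum_nonneg cyl that(1))
    show "word_sum S P \<psi> w \<le> ereal t"
      using word_sum_mono[OF that(2)] below by (rule order.trans)
  qed
  obtain i where "i \<le> N" "w \<in> level_words S P \<eta> \<phi>\<^sub>1 C (real i * \<eta>)"
    using grid[of "\<phi>\<^sub>1"] nonneg by fastforce
  obtain j where "j \<le> N" "w \<in> level_words S P \<eta> \<phi>\<^sub>2 C (real j * \<eta>)"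
    using grid[of "\<phi>\<^sub>2"] nonneg by fastforce
  with w \<open>i \<le> N\<close> \<open>w \<in> level_words S P \<eta> \<phi>\<^sub>1 C (real i * \<eta>)\<close>
  show "w \<in> (\<Union>(i, j)\<in>{..N} \<times> {..N}. level_words S P \<eta> (\<lambda>x. \<phi>\<^sub>1 x + \<phi>\<^sub>2 x) C t
       \<inter> level_words S P \<eta> \<phi>\<^sub>1 C (real i * \<eta>) \<inter> level_words S P \<eta> \<phi>\<^sub>2 C (real j * \<eta>))"
    by (intro UN_I[of "(i, j)"]) auto
qed

lemma level_words_add_Int_less:
  assumes "w \<in> level_words S P \<eta> (\<lambda>x. \<phi>\<^sub>1 x + \<phi>\<^sub>2 x) C t \<inter> level_words S P \<eta> \<phi>\<^sub>1 C u
    \<inter> level_words S P \<eta> \<phi>\<^sub>2 C v"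
  shows "t - \<eta> < u + v"
proof -
  have "ereal (t - \<eta>) < word_sum S P (\<lambda>x. \<phi>\<^sub>1 x + \<phi>\<^sub>2 x) w"
    using assms unfolding level_words_def by auto
  also have "\<dots> \<le> word_sum S P \<phi>\<^sub>1 w + word_sum S P \<phi>\<^sub>2 w"
    by (rule word_sum_add_le)
  also have "\<dots> \<le> ereal u + ereal v"
    using assms unfolding level_words_def by (intro add_mono) auto
  finally show ?thesis by simp
qed

lemma level_words_bin_weight_le:
  fixes f :: "'a list \<Rightarrow> ennreal"
  assumes "a > 0" "b > 0" "0 \<le> T" "2 * T + \<eta> \<le> t" "0 \<le> u" "0 \<le> v"
    and bound1: "\<And>s. T \<le> s \<Longrightarrow> infsum f (level_words S P \<eta> \<phi>\<^sub>1 C s) \<le> ennreal (exp (- a * s))"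
    and bound2: "\<And>s. T \<le> s \<Longrightarrow> infsum f (level_words S P \<eta> \<phi>\<^sub>2 C s) \<le> ennreal (exp (- b * s))"
  defines "bin \<equiv> level_words S P \<eta> (\<lambda>x. \<phi>\<^sub>1 x + \<phi>\<^sub>2 x) C t
    \<inter> level_words S P \<eta> \<phi>\<^sub>1 C u \<inter> level_words S P \<eta> \<phi>\<^sub>2 C v"
  shows "infsum f bin \<le> ennreal (exp (- (a * b / (a + b)) * (t - \<eta> - T)))"
proof (cases "bin = {}")
  case False
  then obtain w where "w \<in> bin" by auto
  then have "t - \<eta> < u + v"
    unfolding bin_def by (rule level_words_add_Int_less)
  with assms(1-6) have "(T \<le> u \<and> a * b / (a + b) * (t - \<eta> - T) \<le> a * u) \<or>
      (T \<le> v \<and> a * b / (a + b) * (t - \<eta> - T) \<le> b * v)"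
    by (intro harmonic_split_above) auto
  then show ?thesis
  proof
    assume u: "T \<le> u \<and> a * b / (a + b) * (t - \<eta> - T) \<le> a * u"
    have "infsum f bin \<le> infsum f (level_words S P \<eta> \<phi>\<^sub>1 C u)"
      unfolding bin_def by (rule infsum_mono_set_ennreal) auto
    also have "\<dots> \<le> ennreal (exp (- a * u))"
      using bound1 u by blast
    also have "\<dots> \<le> ennreal (exp (- (a * b / (a + b)) * (t - \<eta> - T)))"
      using u by (intro ennreal_leI) simp
    finally show ?thesis .
  next
    assume v: "T \<le> v \<and> a * b / (a + b) * (t - \<eta> - T) \<le> b * v"
    have "infsum f bin \<le> infsum f (level_words S P \<eta> \<phi>\<^sub>2 C v)"
      unfolding bin_def by (rule infsum_mono_set_ennreal) auto
    also have "\<dots> \<le> ennreal (exp (- b * v))"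
      using bound2 v by blast
    also have "\<dots> \<le> ennreal (exp (- (a * b / (a + b)) * (t - \<eta> - T)))"
      using v by (intro ennreal_leI) simp
    finally show ?thesis .
  qed
qed simp

lemma level_words_add_weight_le:
  fixes f :: "'a list \<Rightarrow> ennreal"
  assumes "\<eta> > 0" "a > 0" "b > 0" "0 \<le> T" "2 * T + \<eta> \<le> t"
    and nonneg: "\<And>x. x \<in> subshift S P \<Longrightarrow> 0 \<le> \<phi>\<^sub>1 x" "\<And>x. x \<in> subshift S P \<Longrightarrow> 0 \<le> \<phi>\<^sub>2 x"
    and bound1: "\<And>s. T \<le> s \<Longrightarrow> infsum f (level_words S P \<eta> \<phi>\<^sub>1 C s) \<le> ennreal (exp (- a * s))"
    and bound2: "\<And>s. T \<le> s \<Longrightarrow> infsum f (level_words S P \<eta> \<phi>\<^sub>2 C s) \<le> ennreal (exp (- b * s))"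
  shows "infsum f (level_words S P \<eta> (\<lambda>x. \<phi>\<^sub>1 x + \<phi>\<^sub>2 x) C t)
    \<le> ennreal ((real (nat \<lceil>t / \<eta>\<rceil>) + 1)\<^sup>2 * exp (- (a * b / (a + b)) * (t - \<eta> - T)))"
proof -
  define N where "N = nat \<lceil>t / \<eta>\<rceil>"
  define E where "E = exp (- (a * b / (a + b)) * (t - \<eta> - T))"
  define L where "L = (\<lambda>\<phi>. level_words S P \<eta> \<phi> C)"
  define bin where "bin = (\<lambda>(i::nat, j::nat).
    L (\<lambda>x. \<phi>\<^sub>1 x + \<phi>\<^sub>2 x) t \<inter> L \<phi>\<^sub>1 (real i * \<eta>) \<inter> L \<phi>\<^sub>2 (real j * \<eta>))"
  have "infsum f (L (\<lambda>x. \<phi>\<^sub>1 x + \<phi>\<^sub>2 x) t) \<le> infsum f (\<Union>k\<in>{..N} \<times> {..N}. bin k)"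
    using level_words_add_subset_bins[OF assms(1) nonneg, where t = t and C = C]
    unfolding L_def bin_def N_def by (intro infsum_mono_set_ennreal) (simp add: split_def)
  also have "\<dots> \<le> (\<Sum>k\<in>{..N} \<times> {..N}. infsum f (bin k))"
    by (rule infsum_UN_le_ennreal) simp
  also have "\<dots> \<le> (\<Sum>k\<in>{..N} \<times> {..N}. ennreal E)"
  proof (rule sum_mono)
    fix k :: "nat \<times> nat"
    obtain i j where k: "k = (i, j)" by (cases k)
    show "infsum f (bin k) \<le> ennreal E"
      unfolding k bin_def L_def E_def prod.case
      by (rule level_words_bin_weight_le[OF assms(2-5) _ _ bound1 bound2]) (use assms(1) in auto)
  qed
  also have "\<dots> = ennreal (real (card ({..N} \<times> {..N})) * E)"
    by (simp add: ennreal_mult E_def ennreal_of_nat_eq_real_of_nat)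
  also have "real (card ({..N} \<times> {..N})) = (real N + 1)\<^sup>2"
    by (simp add: power2_eq_square algebra_simps)
  finally show ?thesis unfolding L_def N_def E_def .
qed

lemma nat_ceiling_divide_add_one_le:
  fixes \<eta> t :: real
  assumes "\<eta> > 0" "2 \<le> t"
  shows "real (nat \<lceil>t / \<eta>\<rceil>) + 1 \<le> (1 / \<eta> + 1) * t"
proof -
  have "real (nat \<lceil>t / \<eta>\<rceil>) = of_int \<lceil>t / \<eta>\<rceil>"
    using assms by simp
  also have "\<dots> \<le> t / \<eta> + 1"
    by (rule of_int_ceiling_le_add_one)
  finally show ?thesis
    using assms(2) by (simp add: algebra_simps)
qed

lemma induced_pressure_add_le_of_less:
  assumes "\<eta> > 0" "a > 0" "b > 0"
    and nonneg: "\<And>x. x \<in> subshift S P \<Longrightarrow> 0 \<le> \<phi>\<^sub>1 x" "\<And>x. x \<in> subshift S P \<Longrightarrow> 0 \<le> \<phi>\<^sub>2 x"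
    and less: "induced_pressure S P \<eta> \<phi>\<^sub>1 p C < ereal (- a)" "induced_pressure S P \<eta> \<phi>\<^sub>2 p C < ereal (- b)"
  shows "induced_pressure S P \<eta> (\<lambda>x. \<phi>\<^sub>1 x + \<phi>\<^sub>2 x) p C \<le> ereal (- (a * b / (a + b)))"
proof -
  define f where "f = (\<lambda>w. exp_ereal (word_sum S P p w))"
  define L where "L = (\<lambda>\<phi>. level_words S P \<eta> \<phi> C)"
  have "\<forall>\<^sub>F s in at_top.
      infsum f (L \<phi>\<^sub>1 s) \<le> ennreal (exp (- a * s)) \<and> infsum f (L \<phi>\<^sub>2 s) \<le> ennreal (exp (- b * s))"
    using less[unfolded induced_pressure_eq_growth_rate, THEN eventually_le_exp_if_growth_rate_less]
    unfolding f_def L_def by (rule eventually_conj)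
  then obtain T0 where T0: "\<And>s. T0 \<le> s \<Longrightarrow>
      infsum f (L \<phi>\<^sub>1 s) \<le> ennreal (exp (- a * s)) \<and> infsum f (L \<phi>\<^sub>2 s) \<le> ennreal (exp (- b * s))"
    unfolding eventually_at_top_linorder by blast
  define T where "T = max T0 0"
  have "\<forall>\<^sub>F t in at_top. infsum f (L (\<lambda>x. \<phi>\<^sub>1 x + \<phi>\<^sub>2 x) t)
      \<le> ennreal (((1 / \<eta> + 1) * t)\<^sup>2 * exp (- (a * b / (a + b)) * (t - (\<eta> + T))))"
    using eventually_ge_at_top[of "max (2 * T + \<eta>) 2"]
  proof eventually_elim
    case (elim t)
    have "infsum f (L (\<lambda>x. \<phi>\<^sub>1 x + \<phi>\<^sub>2 x) t)
        \<le> ennreal ((real (nat \<lceil>t / \<eta>\<rceil>) + 1)\<^sup>2 * exp (- (a * b / (a + b)) * (t - \<eta> - T)))"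
      unfolding L_def
      by (rule level_words_add_weight_le[OF assms(1-3) _ _ nonneg]) (use elim T0 in \<open>auto simp: T_def L_def\<close>)
    also have "\<dots> \<le> ennreal (((1 / \<eta> + 1) * t)\<^sup>2 * exp (- (a * b / (a + b)) * (t - \<eta> - T)))"
      using nat_ceiling_divide_add_one_le[OF assms(1), of t] elim
      by (intro ennreal_leI mult_right_mono power_mono) auto
    also have "t - \<eta> - T = t - (\<eta> + T)"
      by simp
    finally show ?case .
  qed
  then show ?thesis
    unfolding induced_pressure_eq_growth_rate f_def L_def
    by (rule growth_rate_le_if_eventually_le_quadratic_exp) (use assms(1) in \<open>simp add: add_pos_pos\<close>)
qed

lemma induced_pressure_add_le:
  assumes "\<eta> > 0" "a > 0" "b > 0"
    and nonneg: "\<And>x. x \<in> subshift S P \<Longrightarrow> 0 \<le> \<phi>\<^sub>1 x" "\<And>x. x \<in> subshift S P \<Longrightarrow> 0 \<le> \<phi>\<^sub>2 x"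
    and le: "induced_pressure S P \<eta> \<phi>\<^sub>1 p C \<le> ereal (- a)" "induced_pressure S P \<eta> \<phi>\<^sub>2 p C \<le> ereal (- b)"
  shows "induced_pressure S P \<eta> (\<lambda>x. \<phi>\<^sub>1 x + \<phi>\<^sub>2 x) p C \<le> ereal (- (a * b / (a + b)))"
proof (rule ereal_le_epsilon2)
  fix e :: real assume "0 < e"
  define q where "q = a * b / (a + b)"
  define \<epsilon> where "\<epsilon> = min (1 / 2) (e / q)"
  have "q > 0" using assms(2,3) unfolding q_def by simp
  with \<open>0 < e\<close> have \<epsilon>: "0 < \<epsilon>" "\<epsilon> < 1" "\<epsilon> * q \<le> e"
    unfolding \<epsilon>_def by (auto simp: min_def field_simps)
  have "induced_pressure S P \<eta> (\<lambda>x. \<phi>\<^sub>1 x + \<phi>\<^sub>2 x) p C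
      \<le> ereal (- ((1 - \<epsilon>) * a * ((1 - \<epsilon>) * b) / ((1 - \<epsilon>) * a + (1 - \<epsilon>) * b)))"
  proof (intro induced_pressure_add_le_of_less assms(1) nonneg)
    show "induced_pressure S P \<eta> \<phi>\<^sub>1 p C < ereal (- ((1 - \<epsilon>) * a))"
      using le(1) by (rule order.strict_trans1) (use \<epsilon> assms(2) in simp)
    show "induced_pressure S P \<eta> \<phi>\<^sub>2 p C < ereal (- ((1 - \<epsilon>) * b))"
      using le(2) by (rule order.strict_trans1) (use \<epsilon> assms(3) in simp)
  qed (use \<epsilon> assms(2,3) in simp_all)
  also have "(1 - \<epsilon>) * a * ((1 - \<epsilon>) * b) / ((1 - \<epsilon>) * a + (1 - \<epsilon>) * b)
      = (1 - \<epsilon>) * ((1 - \<epsilon>) * (a * b)) / ((1 - \<epsilon>) * (a + b))"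
    by (simp add: algebra_simps)
  also have "\<dots> = (1 - \<epsilon>) * q"
    using \<epsilon>(2) unfolding q_def by (subst mult_divide_mult_cancel_left) auto
  also have "- ((1 - \<epsilon>) * q) \<le> - q + e"
    using \<epsilon>(3) by (simp add: algebra_simps)
  finally show "induced_pressure S P \<eta> (\<lambda>x. \<phi>\<^sub>1 x + \<phi>\<^sub>2 x) p C \<le> ereal (- (a * b / (a + b))) + ereal e"
    unfolding q_def by simp
qed

lemma ereal_finite_negativeE:
  assumes "-\<infinity> < x" "x < 0"
  obtains a where "x = ereal (- a)" "a > 0"
proof (cases x)
  case (real r)
  with assms show ?thesis by (intro that[of "- r"]) auto
qed (use assms in auto)

lemma harmonic_reciprocal_le:
  fixes a b :: real and L :: ereal
  assumes "a > 0" "b > 0" "L \<le> ereal (- (a * b / (a + b)))"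
  shows "1 / ereal (- a) + 1 / ereal (- b) \<le> 1 / L"
proof -
  have "1 / ereal (- a) + 1 / ereal (- b) = ereal (1 / (- (a * b / (a + b))))"
    using assms(1,2) by (simp add: one_ereal_def field_simps)
  also have "\<dots> \<le> 1 / L"
  proof (cases L)
    case (real l)
    with assms have "l \<le> - (a * b / (a + b))" "- (a * b / (a + b)) < 0"
      by simp_all
    then have "1 / (- (a * b / (a + b))) \<le> 1 / l"
      by (metis le_imp_inverse_le_neg inverse_eq_divide)
    with real \<open>- (a * b / (a + b)) < 0\<close> show ?thesis
      by (simp add: one_ereal_def)
  qed (use assms in simp_all)
  finally show ?thesis .
qed

theorem proposition6p7:
  fixes S :: "'a set" and P :: "'a \<Rightarrow> 'a \<Rightarrow> real"
    and p \<phi>1 \<phi>2 :: "(nat \<Rightarrow> 'a) \<Rightarrow> real" and C :: "'a list set" and \<eta> :: real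
  assumes "countable S"
    and "C \<subseteq> admissible_words S P"
    and "\<eta> > 0"
    and "\<exists>c>0. \<forall>x\<in>subshift S P. c \<le> \<phi>1 x"
    and "\<exists>M. \<forall>x\<in>subshift S P. \<phi>1 x \<le> M"
    and "\<exists>c>0. \<forall>x\<in>subshift S P. c \<le> \<phi>2 x"
    and "\<exists>M. \<forall>x\<in>subshift S P. \<phi>2 x \<le> M"
    and "-\<infinity> < induced_pressure S P \<eta> \<phi>1 p C" and "induced_pressure S P \<eta> \<phi>1 p C < 0"
    and "-\<infinity> < induced_pressure S P \<eta> \<phi>2 p C" and "induced_pressure S P \<eta> \<phi>2 p C < 0"
  shows "1 / induced_pressure S P \<eta> (\<lambda>x. \<phi>1 x + \<phi>2 x) p C
           \<ge> 1 / induced_pressure S P \<eta> \<phi>1 p C + 1 / induced_pressure S P \<eta> \<phi>2 p C"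
proof -
  obtain a where a: "induced_pressure S P \<eta> \<phi>1 p C = ereal (- a)" "a > 0"
    using assms(8,9) by (rule ereal_finite_negativeE)
  obtain b where b: "induced_pressure S P \<eta> \<phi>2 p C = ereal (- b)" "b > 0"
    using assms(10,11) by (rule ereal_finite_negativeE)
  have "\<And>x. x \<in> subshift S P \<Longrightarrow> 0 \<le> \<phi>1 x" "\<And>x. x \<in> subshift S P \<Longrightarrow> 0 \<le> \<phi>2 x"
    using assms(4,6) by force+
  with assms(3) a b have "induced_pressure S P \<eta> (\<lambda>x. \<phi>1 x + \<phi>2 x) p C \<le> ereal (- (a * b / (a + b)))"
    by (intro induced_pressure_add_le) auto
  from harmonic_reciprocal_le[OF a(2) b(2) this] show ?thesis
    unfolding a(1) b(1) .
qed

end
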